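(* Let $k,d\geq1$ and $L\geq4(k+1)d$, and let $\mathcal{T}^{d+1}$ be the teacher class defined in the context, with $H_\bullet=\{(2,0),(1,1)\}$. For every (possibly randomized) DFF algorithm $\mathcal{A}$, \[M^L_k(\mathcal{A},\mathcal{T}^{d+1},H_\bullet)\geq(k+1)d-1.\]
   Context: Setting. A teacher over $\mathcal{X},\mathcal{Y},\Phi$ ($\bot$ a null symbol) is a pair $T=(\ell,\psi)$ with $\ell:\mathcal{X}\to\mathcal{Y}$ and $\psi:\mathcal{X}\times\mathcal{X}\to\Phi\cup\{\bot\}$ such that whenever $\ell(x)\neq\ell(\hat x)$, $\phi:=\psi(x,\hat x)\in\Phi$, $\phi(x)=1$ and $\phi(\hat x)=0$. A teacher class is a set of teachers. A history is a non-empty $H\subseteq\mathcal{X}\times\mathcal{Y}$; a teacher $(\ell,\psi)$ is consistent with $H$ if $\ell(x)=y$ for all $(x,y)\in H$; $\mathcal{T}_H$ is the set of teachers in $\mathcal{T}$ consistent with $H$. DFF protocol. A DFF algorithm is given $H$ in advance. In each round $t$: an example $x_t$ arrives; the algorithm outputs $(\hat x_t,\hat y_t)\in H\cup\{(x_s,y_s):s<t\}$ (predicted label $\hat y_t$, explanation $\hat x_t$); if $\hat y_t=y_t$ (the provided label of $x_t$) it learns only that it was correct; otherwise (a mistake) it receives $y_t$ and a feature $\phi_t$. Non-realizable mistake bound with adaptive adversary. An interaction over $L$ rounds produces $S=((x_t,y_t,\hat x_t,\hat y_t,\phi_t))_{t\in[L]}$, with $\phi_t=\bot$ when $\hat y_t=y_t$.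 An adversary, in each round $t$, chooses $(x_t,y_t,\psi_t)$ with $\psi_t:\mathcal{X}\times\mathcal{X}\to\Phi\cup\{\bot\}$ as a function of the past interaction $S_{t-1}$; then the algorithm chooses $(\hat x_t,\hat y_t)$ (possibly randomly) as a function of $S_{t-1}$ and $x_t$; then, if $\hat y_t\neq y_t$, $\phi_t=\psi_t(x_t,\hat x_t)$ is revealed together with $y_t$. $S$ is $k$-consistent with a teacher $(f,\psi)$ if there is $E\subseteq[L]$, $|E|\leq k$, such that for all $t\in[L]\setminus E$, $f(x_t)=y_t$ and, if $\hat y_t\neq y_t$, $\psi(x_t,\hat x_t)=\phi_t$. $M^L_k(\mathcal{A},\mathcal{T},H)$ is the supremum, over all adversaries whose interaction with $\mathcal{A}$ produces with probability $1$ a sequence that is $k$-consistent with some teacher in $\mathcal{T}_H$, of the expected number of mistakes of $\mathcal{A}$ over $L$ rounds. Construction. $\mathcal{X}=\mathbb{N}=\{1,2,\dots\}$, $\mathcal{Y}=\{0,1\}$, $\Phi=\{0,1\}^{\mathcal{X}}$. For $i\geq0$ let $\mathcal{X}_i=\{2^i,2^i+1,\dots,2^{i+1}-1\}$. For $i\geq1$, $\mathcal{F}^d_i$ is the set of all $f:\mathcal{X}\to\{0,1\}$ with $f(1)=1$ and $f(x)=0$ for all $x\notin\mathcal{X}_i\cup\{1\}$ (arbitrary on $\mathcal{X}_i$). Let $p_i$ be a prime with $p_i\geq2^{|\mathcal{X}_i|}$ and fix an injective map $b_i:\mathcal{F}^d_i\to\mathbb{F}_{p_i}$. For $\bar c=(c_0,\dots,c_{d-1})\in\mathbb{F}_{p_i}^d$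 let $P'[\bar c](z)=(c_0+\sum_{j=1}^{d-1}c_jz^j)\bmod p_i$ and $P[\bar c]:\mathcal{X}_i\to\mathbb{N}$, $P[\bar c](x)=2^{i+1}+P'[\bar c](x-2^i+1)$ (viewing $P'$ values in $\{0,\dots,p_i-1\}$). For $x_1,\dots,x_l\in\mathcal{X}$ let $\mathbb{I}[x_1,\dots,x_l]$ be the feature equal to $1$ exactly on $\{x_1,\dots,x_l\}$. For $f\in\mathcal{F}^d_i$ and $\bar a:\mathcal{X}_i\times\{0,1\}\to\mathbb{F}^d_{p_i}$ define $\psi^f_{\bar a}(x,\hat x)=\mathbb{I}[x,\,P[\bar a(\hat x,f(x))](x)]$ if $x,\hat x\in\mathcal{X}_i$, and $\psi^f_{\bar a}(x,\hat x)=\mathbb{I}[x]$ otherwise. Let $\Psi_f=\{\psi^f_{\bar a}:\bar a:\mathcal{X}_i\times\{0,1\}\to\mathbb{F}^d_{p_i}$ such that for all $\hat x\in\mathcal{X}_i$ with $f(\hat x)=1$, the constant coefficient of $\bar a(\hat x,0)$ equals $b_i(f)\}$. Then $\mathcal{T}^d_i=\{(f,\psi):f\in\mathcal{F}^d_i,\psi\in\Psi_f\}$ and $\mathcal{T}^{d+1}=\bigcup_{i\geq1}\mathcal{T}^d_i$. *)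

theory Defs
  imports "HOL-Probability.Probability"
begin

text \<open>The instance space is X = {1,2,...}, represented by nat
(elements of X are the n with n >= 1). Labels Y = {0,1} are represented by bool
(0 = False, 1 = True). A feature in Phi = {0,1}^X is represented by a function
nat => bool whose value at the non-element 0 is False. The null symbol is None.\<close>

type_synonym feature = "nat \<Rightarrow> bool"
type_synonym expl = "nat \<Rightarrow> nat \<Rightarrow> feature option"
type_synonym teacher = "(nat \<Rightarrow> bool) \<times> expl"
\<comment> \<open>one round of an interaction: (x_t, y_t, xhat_t, yhat_t, phi_t)\<close>
type_synonym entry = "nat \<times> bool \<times> nat \<times> bool \<times> feature option"
\<comment> \<open>randomized DFF algorithm: distribution of (xhat_t, yhat_t) given S_(t-1) and x_t\<close>
type_synonym alg = "entry list \<Rightarrow> nat \<Rightarrow> (nat \<times> bool) pmf"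
\<comment> \<open>adaptive adversary: (x_t, y_t, psi_t) as a function of S_(t-1)\<close>
type_synonym adv = "entry list \<Rightarrow> nat \<times> bool \<times> expl"

definition is_feature :: "feature \<Rightarrow> bool" where
  "is_feature \<phi> \<longleftrightarrow> \<not> \<phi> 0"

definition consistent_teachers :: "teacher set \<Rightarrow> (nat \<times> bool) set \<Rightarrow> teacher set" where
  "consistent_teachers T H = {Te \<in> T. \<forall>(x, y) \<in> H. fst Te x = y}"

definition dff_alg :: "(nat \<times> bool) set \<Rightarrow> alg \<Rightarrow> bool" where
  "dff_alg H A \<longleftrightarrow>
     (\<forall>S x. set_pmf (A S x) \<subseteq> H \<union> (\<lambda>(x, y, _, _, _). (x, y)) ` set S)"

definition adm_adv :: "adv \<Rightarrow> bool" where
  "adm_adv Adv \<longleftrightarrow>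
     (\<forall>S. 1 \<le> fst (Adv S) \<and>
          (\<forall>u v \<phi>. snd (snd (Adv S)) u v = Some \<phi> \<longrightarrow> is_feature \<phi>))"

primrec run :: "alg \<Rightarrow> adv \<Rightarrow> nat \<Rightarrow> entry list pmf" where
  "run A Adv 0 = return_pmf []"
| "run A Adv (Suc t) =
     bind_pmf (run A Adv t) (\<lambda>S. case Adv S of (x, y, \<psi>) \<Rightarrow>
       map_pmf (\<lambda>(xh, yh). S @ [(x, y, xh, yh, if yh = y then None else \<psi> x xh)]) (A S x))"

definition num_mistakes :: "entry list \<Rightarrow> nat" where
  "num_mistakes S = length (filter (\<lambda>(x, y, xh, yh, \<phi>). yh \<noteq> y) S)"

definition expected_mistakes :: "alg \<Rightarrow> adv \<Rightarrow> nat \<Rightarrow> real" where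
  "expected_mistakes A Adv L =
     measure_pmf.expectation (run A Adv L) (\<lambda>S. real (num_mistakes S))"

definition k_consistent :: "nat \<Rightarrow> teacher \<Rightarrow> entry list \<Rightarrow> bool" where
  "k_consistent k Te S \<longleftrightarrow>
     (\<exists>E \<subseteq> {..<length S}. card E \<le> k \<and>
        (\<forall>t < length S. t \<notin> E \<longrightarrow>
           (case S ! t of (x, y, xh, yh, \<phi>) \<Rightarrow>
              fst Te x = y \<and> (yh \<noteq> y \<longrightarrow> snd Te x xh = \<phi>))))"

definition mistake_bound :: "nat \<Rightarrow> nat \<Rightarrow> alg \<Rightarrow> teacher set \<Rightarrow> (nat \<times> bool) set \<Rightarrow> ereal" where
  "mistake_bound L k A T H =
     (SUP Adv \<in> {Adv. adm_adv Adv \<and>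
                   (\<forall>S \<in> set_pmf (run A Adv L).
                      \<exists>Te \<in> consistent_teachers T H. k_consistent k Te S)}.
        ereal (expected_mistakes A Adv L))"

definition Xblock :: "nat \<Rightarrow> nat set" where
  "Xblock i = {2 ^ i ..< 2 ^ (i + 1)}"

definition Fcls :: "nat \<Rightarrow> (nat \<Rightarrow> bool) set" where
  "Fcls i = {f. f 1 \<and> (\<forall>x. x \<notin> Xblock i \<union> {1} \<longrightarrow> \<not> f x)}"

definition Ppoly' :: "nat \<Rightarrow> nat \<Rightarrow> nat list \<Rightarrow> nat \<Rightarrow> nat" where
  "Ppoly' d p c z = (c ! 0 + (\<Sum>j \<in> {1..<d}. c ! j * z ^ j)) mod p"

definition Ppoly :: "nat \<Rightarrow> nat \<Rightarrow> nat \<Rightarrow> nat list \<Rightarrow> nat \<Rightarrow> nat" where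
  "Ppoly d p i c x = 2 ^ (i + 1) + Ppoly' d p c (x + 1 - 2 ^ i)"

definition indic :: "nat set \<Rightarrow> feature" where
  "indic A = (\<lambda>z. z \<in> A)"

definition psi_a :: "nat \<Rightarrow> nat \<Rightarrow> nat \<Rightarrow> (nat \<Rightarrow> bool) \<Rightarrow> (nat \<Rightarrow> bool \<Rightarrow> nat list) \<Rightarrow> expl" where
  "psi_a d p i f a = (\<lambda>x xh.
     if x \<in> Xblock i \<and> xh \<in> Xblock i
     then Some (indic {x, Ppoly d p i (a xh (f x)) x})
     else Some (indic {x}))"

definition Psi_cls :: "nat \<Rightarrow> nat \<Rightarrow> nat \<Rightarrow> ((nat \<Rightarrow> bool) \<Rightarrow> nat) \<Rightarrow> (nat \<Rightarrow> bool) \<Rightarrow> expl set" where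
  "Psi_cls d p i bi f =
     {psi_a d p i f a | a.
        (\<forall>xh \<in> Xblock i. \<forall>v. length (a xh v) = d \<and> (\<forall>j < d. a xh v ! j < p)) \<and>
        (\<forall>xh \<in> Xblock i. f xh \<longrightarrow> a xh False ! 0 = bi f)}"

definition Tcls_i :: "nat \<Rightarrow> nat \<Rightarrow> nat \<Rightarrow> ((nat \<Rightarrow> bool) \<Rightarrow> nat) \<Rightarrow> teacher set" where
  "Tcls_i d p i bi = {(f, \<psi>) | f \<psi>. f \<in> Fcls i \<and> \<psi> \<in> Psi_cls d p i bi f}"

definition Tcls :: "nat \<Rightarrow> (nat \<Rightarrow> nat) \<Rightarrow> (nat \<Rightarrow> (nat \<Rightarrow> bool) \<Rightarrow> nat) \<Rightarrow> teacher set" where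
  "Tcls d p b = (\<Union>i \<in> {1..}. Tcls_i d (p i) i (b i))"

definition H_bullet :: "(nat \<times> bool) set" where
  "H_bullet = {(2, False), (1, True)}"

end

theory Submission
  imports Defs "HOL-Computational_Algebra.Polynomial" "HOL-Computational_Algebra.Primes"
begin

text \<open>The adversary shows fresh points of one block X_i, each labelled so that the algorithm errs
  with probability at least 1/2, until (k+1)d mistakes have been made, and the point 1 afterwards;
  a capped random walk estimate turns this into (k+1)d - 1 expected mistakes within 4(k+1)d rounds.

  For consistency: when a DFF algorithm explains a false positive on a 0-point by a point u, a
  teacher with f(u) = 1 must reveal one value of a polynomial of degree < d whose constant term
  b(f) is fixed. The adversary reveals 0, and as long as u explains fewer than d false positives
  some such polynomial vanishes at all revealed points. Explanations used d times are relabelled 0,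
  the round showing them becoming an exception. This fails only when a (k+1)-st explanation would
  be relabelled; there the adversary reveals the value of the polynomial of the final teacher,
  and by then (k+1)d mistakes have been made.\<close>

section \<open>Capped random walk\<close>

text \<open>The expected value of min M (m + X) for X binomially distributed with parameters r and 1/2.\<close>
fun capped_walk :: "nat \<Rightarrow> nat \<Rightarrow> nat \<Rightarrow> real" where
  "capped_walk M 0 m = real (min m M)"
| "capped_walk M (Suc r) m =
     (if M \<le> m then real M else (capped_walk M r (Suc m) + capped_walk M r m) / 2)"

lemma capped_walk_capped: "M \<le> m \<Longrightarrow> capped_walk M r m = real M"
  by (cases r) auto

lemma capped_walk_le_cap: "capped_walk M r m \<le> real M"
proof (induction r arbitrary: m)
  case (Suc r)
  then show ?case using Suc.IH[of m] Suc.IH[of "Suc m"] by (simp; linarith)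
qed simp

lemma capped_walk_mono: "capped_walk M r m \<le> capped_walk M r (Suc m)"
proof (induction r arbitrary: m)
  case (Suc r)
  show ?case
  proof (cases "M \<le> Suc m")
    case True
    then show ?thesis using capped_walk_le_cap[of M "Suc r" m] by (simp add: capped_walk_capped)
  next
    case False
    then show ?thesis using Suc.IH[of m] Suc.IH[of "Suc m"] by auto
  qed
qed simp

lemma capped_walk_le_Suc: "capped_walk M r m \<le> capped_walk M (Suc r) m"
  using capped_walk_mono[of M r m] by (cases "M \<le> m") (auto simp: capped_walk_capped)

lemma capped_walk_quadratic_lower:
  assumes "0 < M"
  shows "real M - ((2 * real M - real m - real r / 2)\<^sup>2 + real r / 4) / (4 * real M)
           \<le> capped_walk M r m"
proof -
  define W :: "nat \<Rightarrow> nat \<Rightarrow> real"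
    where "W r m = real M - ((2 * real M - real m - real r / 2)\<^sup>2 + real r / 4) / (4 * real M)"
    for r m
  have W_le_M: "W r m \<le> real M" for r m
    using assms by (simp add: W_def)
  \<comment> \<open>W is exactly preserved by the averaging step of the recursion\<close>
  have W_Suc: "W (Suc r) m = (W r (Suc m) + W r m) / 2" for r m
    using assms by (simp add: W_def field_simps power2_eq_square)
  have "W r m \<le> capped_walk M r m"
  proof (induction r arbitrary: m)
    case 0
    have "(real M - real m) * (4 * real M) \<le> (2 * real M - real m)\<^sup>2"
      by (simp add: power2_eq_square algebra_simps)
    then have "real M - real m \<le> (2 * real M - real m)\<^sup>2 / (4 * real M)"
      using assms by (simp add: pos_le_divide_eq)
    then show ?case using W_le_M[of 0 m] by (simp add: W_def min_def)
  next
    case (Suc r)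
    show ?case
    proof (cases "M \<le> m")
      case True
      then show ?thesis using W_le_M[of "Suc r" m] by (simp add: capped_walk_capped)
    next
      case False
      have "W (Suc r) m = (W r (Suc m) + W r m) / 2" by (rule W_Suc)
      also have "\<dots> \<le> (capped_walk M r (Suc m) + capped_walk M r m) / 2"
        using Suc.IH[of m] Suc.IH[of "Suc m"] by simp
      also have "\<dots> = capped_walk M (Suc r) m" using False by simp
      finally show ?thesis .
    qed
  qed
  then show ?thesis by (simp add: W_def)
qed

lemma capped_walk_ge:
  assumes "0 < M" and "4 * M \<le> L"
  shows "real M - 1 \<le> capped_walk M L 0"
proof -
  have "real M - 1 \<le> capped_walk M (4 * M) 0"
    using capped_walk_quadratic_lower[OF assms(1), of 0 "4 * M"] assms(1) by (simp add: field_simps)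
  also have "\<dots> \<le> capped_walk M L 0"
    using lift_Suc_mono_le[of "\<lambda>r. capped_walk M r 0", OF capped_walk_le_Suc assms(2)] .
  finally show ?thesis .
qed

section \<open>Polynomials vanishing modulo a prime\<close>

lemma Ppoly'_eq_sum: "0 < d \<Longrightarrow> Ppoly' d p c z = (\<Sum>j<d. c ! j * z ^ j) mod p"
  unfolding Ppoly'_def by (simp add: lessThan_atLeast0 sum.atLeast_Suc_lessThan)

lemma Ppoly'_replicate_0: "0 < d \<Longrightarrow> Ppoly' d p (replicate d 0) z = 0"
  by (simp add: Ppoly'_eq_sum)

lemma Ppoly'_coeffs_mod:
  fixes Q :: "int poly"
  assumes "degree Q < d" and "0 < p"
  shows "int (Ppoly' d p (map (\<lambda>j. nat (coeff Q j mod int p)) [0..<d]) z) = poly Q (int z) mod int p"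
proof -
  have "int (Ppoly' d p (map (\<lambda>j. nat (coeff Q j mod int p)) [0..<d]) z)
          = (\<Sum>j<d. (coeff Q j mod int p) * int z ^ j) mod int p"
    using assms by (simp add: Ppoly'_eq_sum of_nat_mod)
  also have "\<dots> = (\<Sum>j<d. (coeff Q j mod int p) * int z ^ j mod int p) mod int p"
    by (simp only: mod_sum_eq)
  also have "\<dots> = (\<Sum>j<d. coeff Q j * int z ^ j mod int p) mod int p"
    by (simp only: mod_mult_left_eq)
  also have "\<dots> = (\<Sum>j<d. coeff Q j * int z ^ j) mod int p"
    by (simp only: mod_sum_eq)
  also have "(\<Sum>j<d. coeff Q j * int z ^ j) = (\<Sum>j\<le>degree Q. coeff Q j * int z ^ j)"
    by (rule sum.mono_neutral_right) (use assms(1) in \<open>auto simp: coeff_eq_0\<close>)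
  finally show ?thesis by (simp add: poly_altdef)
qed

lemma exists_poly_roots_mod_prime:
  fixes p :: nat and Z :: "nat set"
  assumes "prime p" and "finite Z" and "\<forall>z\<in>Z. \<not> p dvd z"
  shows "\<exists>Q :: int poly.
           coeff Q 0 = 1 \<and> degree Q \<le> card Z \<and> (\<forall>z\<in>Z. int p dvd poly Q (int z))"
proof -
  have "\<exists>w. int p dvd 1 - w * int z" if "z \<in> Z" for z
  proof -
    have "coprime p z" using prime_imp_coprime[OF assms(1)] assms(3) that by blast
    then have "coprime (int z) (int p)" by (simp add: coprime_commute)
    then obtain u v where "u * int z + v * int p = 1"
      using bezout_int[of "int z" "int p"] by auto
    then have "1 - u * int z = v * int p" by simp
    then show ?thesis by (metis dvd_triv_right)
  qed
  then obtain w where w: "\<And>z. z \<in> Z \<Longrightarrow> int p dvd 1 - w z * int z" by metis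
  \<comment> \<open>the factor for z has the modular inverse of z as its root\<close>
  define Q :: "int poly" where "Q = (\<Prod>z\<in>Z. [:1, - w z:])"
  have "degree Q \<le> (\<Sum>z\<in>Z. degree [:1, - w z:])"
    unfolding Q_def using degree_prod_sum_le[OF assms(2), of "\<lambda>z. [:1, - w z:]"]
    by (simp only: comp_def)
  also have "\<dots> \<le> (\<Sum>z\<in>Z. 1)" by (rule sum_mono) simp
  finally have "degree Q \<le> card Z" by simp
  moreover have "coeff Q 0 = 1"
    by (simp add: poly_0_coeff_0[symmetric] Q_def poly_prod)
  moreover have "int p dvd poly Q (int z)" if "z \<in> Z" for z
  proof -
    have "int p dvd poly [:1, - w z:] (int z)" using w[OF that] by (simp add: mult.commute)
    also have "\<dots> dvd poly Q (int z)"
      unfolding Q_def poly_prod using dvd_prodI[OF assms(2) that] .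
    finally show ?thesis .
  qed
  ultimately show ?thesis by blast
qed

lemma exists_Ppoly'_vanishing:
  assumes "prime p" and "finite Z" and "card Z < d" and "\<forall>z\<in>Z. \<not> p dvd z" and "c0 < p"
  shows "\<exists>c. length c = d \<and> (\<forall>j<d. c ! j < p) \<and> c ! 0 = c0 \<and> (\<forall>z\<in>Z. Ppoly' d p c z = 0)"
proof -
  obtain Q :: "int poly" where Q0: "coeff Q 0 = 1" and degQ: "degree Q \<le> card Z"
    and Qroots: "\<forall>z\<in>Z. int p dvd poly Q (int z)"
    using exists_poly_roots_mod_prime[OF assms(1,2,4)] by blast
  have p0: "0 < p" using assms(1) prime_gt_0_nat by blast
  define c where "c = map (\<lambda>j. nat (coeff (smult (int c0) Q) j mod int p)) [0..<d]"
  have "Ppoly' d p c z = 0" if "z \<in> Z" for z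
  proof -
    have "int (Ppoly' d p c z) = int c0 * poly Q (int z) mod int p"
      unfolding c_def using Ppoly'_coeffs_mod[of "smult (int c0) Q" d p z] degQ assms(3) p0 by simp
    then show ?thesis using Qroots that by simp
  qed
  moreover have "c ! j < p" if "j < d" for j
    using that p0 by (simp add: c_def nat_less_iff)
  moreover have "c ! 0 = c0"
    using assms(3,5) Q0 by (simp add: c_def)
  moreover have "length c = d" by (simp add: c_def)
  ultimately show ?thesis by blast
qed

section \<open>Interactions and their expected number of mistakes\<close>

lemma expectation_mono_finite_pmf:
  fixes f g :: "'a \<Rightarrow> real"
  assumes "finite (set_pmf p)" and "\<And>x. x \<in> set_pmf p \<Longrightarrow> f x \<le> g x"
  shows "measure_pmf.expectation p f \<le> measure_pmf.expectation p g"
  by (rule integral_mono_AE)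
    (use assms in \<open>auto simp: integrable_measure_pmf_finite AE_measure_pmf_iff\<close>)

lemma expectation_bind_pmf_finite:
  fixes h :: "'b \<Rightarrow> real"
  assumes "finite (set_pmf p)" and "\<And>x. x \<in> set_pmf p \<Longrightarrow> finite (set_pmf (f x))"
  shows "measure_pmf.expectation (bind_pmf p f) h
           = measure_pmf.expectation p (\<lambda>x. measure_pmf.expectation (f x) h)"
proof -
  have "measure_pmf.expectation (bind_pmf p f) h
          = (\<Sum>a\<in>set_pmf p. pmf p a *\<^sub>R measure_pmf.expectation (f a) h)"
    by (rule pmf_expectation_bind) (use assms in auto)
  also have "\<dots> = measure_pmf.expectation p (\<lambda>x. measure_pmf.expectation (f x) h)"
    by (rule integral_measure_pmf[symmetric]) (use assms in auto)
  finally show ?thesis .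
qed

lemma expectation_if_ge_average:
  fixes a c :: real
  assumes "c \<le> a" and "1 / 2 \<le> measure_pmf.prob p {q. Q q}"
  shows "(a + c) / 2 \<le> measure_pmf.expectation p (\<lambda>q. if Q q then a else c)"
proof -
  have "(\<lambda>q. if Q q then a else c) = (\<lambda>q. c + (a - c) * indicator {q. Q q} q)"
    by (auto simp: fun_eq_iff indicator_def)
  then have "measure_pmf.expectation p (\<lambda>q. if Q q then a else c)
               = measure_pmf.expectation p (\<lambda>q. c)
                 + measure_pmf.expectation p (\<lambda>q. (a - c) * indicator {q. Q q} q)"
    by (simp, subst Bochner_Integration.integral_add)
      (auto intro!: integrable_mult_right integrable_real_indicator
        simp: less_top[symmetric] measure_pmf.emeasure_finite)
  then have "measure_pmf.expectation p (\<lambda>q. if Q q then a else c)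
               = c + (a - c) * measure_pmf.prob p {q. Q q}"
    by (simp add: measure_pmf.emeasure_finite)
  moreover have "(a - c) * (1 / 2) \<le> (a - c) * measure_pmf.prob p {q. Q q}"
    using assms by (intro mult_left_mono) auto
  ultimately show ?thesis by (simp add: field_simps)
qed

definition next_entry :: "adv \<Rightarrow> entry list \<Rightarrow> nat \<times> bool \<Rightarrow> entry" where
  "next_entry Adv S q = (case Adv S of (x, y, \<psi>) \<Rightarrow>
     (x, y, fst q, snd q, if snd q = y then None else \<psi> x (fst q)))"

lemma run_Suc_next_entry:
  "run A Adv (Suc t)
     = bind_pmf (run A Adv t) (\<lambda>S. map_pmf (\<lambda>q. S @ [next_entry Adv S q]) (A S (fst (Adv S))))"
  unfolding run.simps next_entry_def by (simp add: case_prod_unfold)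

definition reachable :: "alg \<Rightarrow> adv \<Rightarrow> entry list \<Rightarrow> bool" where
  "reachable A Adv S \<longleftrightarrow>
     (\<forall>j < length S. \<exists>q \<in> set_pmf (A (take j S) (fst (Adv (take j S)))).
        S ! j = next_entry Adv (take j S) q)"

lemma reachable_run:
  assumes "S \<in> set_pmf (run A Adv t)"
  shows "length S = t \<and> reachable A Adv S"
  using assms
proof (induction t arbitrary: S)
  case 0
  then show ?case by (simp add: reachable_def)
next
  case (Suc t)
  obtain S0 q where S0: "S0 \<in> set_pmf (run A Adv t)"
    and q: "q \<in> set_pmf (A S0 (fst (Adv S0)))" and S: "S = S0 @ [next_entry Adv S0 q]"
    using Suc.prems unfolding run_Suc_next_entry by auto
  have len: "length S0 = t" and reach: "reachable A Adv S0" using Suc.IH[OF S0] by auto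
  have "\<exists>q \<in> set_pmf (A (take j S) (fst (Adv (take j S)))). S ! j = next_entry Adv (take j S) q"
    if "j < Suc t" for j
  proof (cases "j < t")
    case True
    then show ?thesis using reach len by (auto simp: reachable_def S nth_append)
  next
    case False
    with that have "j = t" by simp
    then show ?thesis using q len by (auto simp: S)
  qed
  then show ?case using len by (simp add: reachable_def S)
qed

lemma finite_set_pmf_run:
  assumes "\<And>S x. finite (set_pmf (A S x))"
  shows "finite (set_pmf (run A Adv t))"
proof (induction t)
  case (Suc t)
  then show ?case unfolding run_Suc_next_entry using assms by simp
qed simp

lemma finite_set_pmf_dff_alg:
  assumes "dff_alg H A" and "finite H"
  shows "finite (set_pmf (A S x))"
proof (rule finite_subset)
  show "set_pmf (A S x) \<subseteq> H \<union> (\<lambda>(x, y, _, _, _). (x, y)) ` set S"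
    using assms(1) unfolding dff_alg_def by blast
qed (use assms(2) in simp)

lemma length_filter_take_mono:
  assumes "j \<le> j'"
  shows "length (filter P (take j xs)) \<le> length (filter P (take j' xs))"
proof -
  have "take j' xs = take j xs @ drop j (take j' xs)"
    using assms by (metis append_take_drop_id min.absorb1 take_take)
  then show ?thesis by (metis filter_append le_add1 length_append)
qed

lemma num_mistakes_snoc:
  "num_mistakes (S @ [(x, y, xh, yh, \<phi>)]) = num_mistakes S + (if yh \<noteq> y then 1 else 0)"
  by (simp add: num_mistakes_def)

lemma num_mistakes_next_entry:
  "num_mistakes (S @ [next_entry Adv S q])
     = num_mistakes S + (if snd q \<noteq> fst (snd (Adv S)) then 1 else 0)"
  by (simp add: next_entry_def num_mistakes_snoc split: prod.split)

lemma capped_walk_step: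
  assumes "num_mistakes S < M \<Longrightarrow>
             1 / 2 \<le> measure_pmf.prob (A S (fst (Adv S))) {q. snd q \<noteq> fst (snd (Adv S))}"
  shows "capped_walk M (Suc r) (num_mistakes S)
           \<le> measure_pmf.expectation (A S (fst (Adv S)))
                (\<lambda>q. capped_walk M r (num_mistakes (S @ [next_entry Adv S q])))"
proof -
  let ?m = "num_mistakes S"
  have mistakes: "(\<lambda>q. capped_walk M r (num_mistakes (S @ [next_entry Adv S q])))
      = (\<lambda>q. if snd q \<noteq> fst (snd (Adv S)) then capped_walk M r (Suc ?m) else capped_walk M r ?m)"
    by (simp add: num_mistakes_next_entry fun_eq_iff)
  show ?thesis
  proof (cases "M \<le> ?m")
    case True
    then have "(\<lambda>q. capped_walk M r (num_mistakes (S @ [next_entry Adv S q]))) = (\<lambda>q. real M)"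
      by (simp add: num_mistakes_next_entry capped_walk_capped fun_eq_iff)
    with True show ?thesis by simp
  next
    case False
    have "capped_walk M (Suc r) ?m = (capped_walk M r (Suc ?m) + capped_walk M r ?m) / 2"
      using False by simp
    also have "\<dots> \<le> measure_pmf.expectation (A S (fst (Adv S)))
                      (\<lambda>q. if snd q \<noteq> fst (snd (Adv S))
                           then capped_walk M r (Suc ?m) else capped_walk M r ?m)"
      using assms False capped_walk_mono by (intro expectation_if_ge_average) auto
    finally show ?thesis unfolding mistakes .
  qed
qed

lemma expected_mistakes_ge:
  assumes fin: "\<And>S x. finite (set_pmf (A S x))"
    and err: "\<And>S. num_mistakes S < M \<Longrightarrow>
                1 / 2 \<le> measure_pmf.prob (A S (fst (Adv S))) {q. snd q \<noteq> fst (snd (Adv S))}"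
    and "0 < M" and "4 * M \<le> L"
  shows "real M - 1 \<le> expected_mistakes A Adv L"
proof -
  have step: "capped_walk M (Suc r) (num_mistakes S)
      \<le> measure_pmf.expectation (A S (fst (Adv S)))
           (\<lambda>q. capped_walk M r (num_mistakes (S @ [next_entry Adv S q])))" for S r
    by (rule capped_walk_step) (rule err)
  \<comment> \<open>the capped walk value of the remaining rounds is a submartingale along the run\<close>
  have submartingale: "capped_walk M L 0
      \<le> measure_pmf.expectation (run A Adv t) (\<lambda>S. capped_walk M (L - t) (num_mistakes S))"
    if "t \<le> L" for t
    using that
  proof (induction t)
    case 0
    then show ?case by (simp add: num_mistakes_def)
  next
    case (Suc t)
    have "capped_walk M L 0
        \<le> measure_pmf.expectation (run A Adv t) (\<lambda>S. capped_walk M (Suc (L - Suc t)) (num_mistakes S))"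
      using Suc by (simp add: Suc_diff_Suc)
    also have "\<dots> \<le> measure_pmf.expectation (run A Adv t)
        (\<lambda>S. measure_pmf.expectation (map_pmf (\<lambda>q. S @ [next_entry Adv S q]) (A S (fst (Adv S))))
               (\<lambda>S'. capped_walk M (L - Suc t) (num_mistakes S')))"
      by (rule expectation_mono_finite_pmf[OF finite_set_pmf_run[OF fin]])
        (simp add: step del: capped_walk.simps(2))
    also have "\<dots> = measure_pmf.expectation (run A Adv (Suc t))
                      (\<lambda>S. capped_walk M (L - Suc t) (num_mistakes S))"
      unfolding run_Suc_next_entry
      by (rule expectation_bind_pmf_finite[symmetric]) (use fin finite_set_pmf_run[OF fin] in auto)
    finally show ?case .
  qed
  have "real M - 1 \<le> capped_walk M L 0" using capped_walk_ge assms(3,4) .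
  also have "\<dots> \<le> measure_pmf.expectation (run A Adv L) (\<lambda>S. capped_walk M 0 (num_mistakes S))"
    using submartingale[of L] by simp
  also have "\<dots> \<le> expected_mistakes A Adv L"
    unfolding expected_mistakes_def
    by (rule expectation_mono_finite_pmf[OF finite_set_pmf_run[OF fin]]) simp
  finally show ?thesis .
qed

definition consistent_entry :: "teacher \<Rightarrow> entry \<Rightarrow> bool" where
  "consistent_entry Te e \<longleftrightarrow>
     (case e of (x, y, xh, yh, \<phi>) \<Rightarrow> fst Te x = y \<and> (yh \<noteq> y \<longrightarrow> snd Te x xh = \<phi>))"

lemma k_consistentI:
  assumes "E \<subseteq> {..<length S}" and "card E \<le> k"
    and "\<And>t. t < length S \<Longrightarrow> t \<notin> E \<Longrightarrow> consistent_entry Te (S ! t)"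
  shows "k_consistent k Te S"
  using assms unfolding k_consistent_def consistent_entry_def by blast

section \<open>The adversary\<close>

locale lower_bound_construction =
  fixes k d L :: nat and p :: "nat \<Rightarrow> nat" and b :: "nat \<Rightarrow> (nat \<Rightarrow> bool) \<Rightarrow> nat"
    and A :: alg
  assumes d_pos: "1 \<le> d" and L_ge: "4 * (k + 1) * d \<le> L"
    and primes: "\<forall>i \<ge> 1. prime (p i) \<and> 2 ^ card (Xblock i) \<le> p i"
    and encodings_less: "\<forall>i \<ge> 1. b i ` Fcls i \<subseteq> {..<p i}"
    and dff: "dff_alg H_bullet A"
begin

text \<open>Any block with more than L points that avoids 1 and 2 would do.\<close>
definition I :: nat where "I = L + 2"

definition P :: nat where "P = p I"

definition B :: "(nat \<Rightarrow> bool) \<Rightarrow> nat" where "B = b I"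

definition M :: nat where "M = (k + 1) * d"

lemma M_pos: "0 < M"
  using d_pos by (simp add: M_def)

lemma L_less: "L < 2 ^ I"
proof -
  have "L < 2 ^ L" by (rule less_exp)
  also have "\<dots> \<le> 2 ^ I" by (simp add: I_def)
  finally show ?thesis .
qed

lemma mem_Xblock_iff: "x \<in> Xblock I \<longleftrightarrow> 2 ^ I \<le> x \<and> x < 2 ^ (I + 1)"
  by (simp add: Xblock_def)

lemma not_mem_Xblock: "x \<le> 2 \<Longrightarrow> x \<notin> Xblock I"
proof -
  have "(2::nat) ^ 2 \<le> 2 ^ I" by (rule power_increasing) (simp_all add: I_def)
  then show "x \<le> 2 \<Longrightarrow> ?thesis" by (simp add: mem_Xblock_iff)
qed

lemma fresh_mem_Xblock: "t < L \<Longrightarrow> 2 ^ I + t \<in> Xblock I"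
  using L_less by (simp add: mem_Xblock_iff)

lemma prime_P: "prime P" and card_Xblock_le_P: "2 ^ card (Xblock I) \<le> P"
  using primes[rule_format, of I] by (simp_all add: P_def I_def)

lemma block_offset_range: "x \<in> Xblock I \<Longrightarrow> 0 < x + 1 - 2 ^ I \<and> x + 1 - 2 ^ I < P"
proof -
  have "2 ^ I < (2::nat) ^ 2 ^ I" by (rule less_exp)
  also have "\<dots> \<le> P" using card_Xblock_le_P by (simp add: Xblock_def)
  finally show "x \<in> Xblock I \<Longrightarrow> ?thesis" by (auto simp: mem_Xblock_iff)
qed

lemma B_less: "f \<in> Fcls I \<Longrightarrow> B f < P"
  using encodings_less by (auto simp: B_def P_def I_def)

text \<open>A false positive explained by u. Under a teacher with label 1 on u it reveals a value of
  the polynomial a(u, 0), whose constant term b(f) is fixed; after d of them (u is exposed) the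
  adversary can make label 1 on u inconsistent.\<close>
definition probe :: "nat \<Rightarrow> entry \<Rightarrow> bool" where
  "probe u e \<longleftrightarrow>
     (case e of (x, y, xh, yh, _) \<Rightarrow> \<not> y \<and> yh \<and> xh = u \<and> x \<in> Xblock I \<and> u \<in> Xblock I)"

definition probes :: "nat \<Rightarrow> entry list \<Rightarrow> nat" where
  "probes u S = length (filter (probe u) S)"

definition exposed :: "entry list \<Rightarrow> nat set" where
  "exposed S = {u. d \<le> probes u S}"

definition probe_points :: "nat \<Rightarrow> entry list \<Rightarrow> nat set" where
  "probe_points u S = (\<lambda>e. fst e + 1 - 2 ^ I) ` {e \<in> set S. probe u e}"

definition labelled_true :: "entry list \<Rightarrow> nat set" where
  "labelled_true S = {x \<in> Xblock I. \<exists>e \<in> set S. fst e = x \<and> fst (snd e)}"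

definition target_label :: "entry list \<Rightarrow> nat \<Rightarrow> bool" where
  "target_label S x \<longleftrightarrow> x = 1 \<or> (x \<in> labelled_true S \<and> x \<notin> exposed S)"

definition vanishing_coeffs :: "nat \<Rightarrow> nat set \<Rightarrow> nat list" where
  "vanishing_coeffs c0 Z =
     (SOME c. length c = d \<and> (\<forall>j<d. c ! j < P) \<and> c ! 0 = c0 \<and> (\<forall>z\<in>Z. Ppoly' d P c z = 0))"

text \<open>The adversary reveals 0, except at the probe exposing the (k+1)-st explanation, where it
  reveals the value of the polynomial that the final teacher attaches to it.\<close>
definition revealed_value :: "entry list \<Rightarrow> nat \<Rightarrow> nat \<Rightarrow> nat" where
  "revealed_value S u z =
     (if u \<notin> exposed S \<and> probes u S = d - 1 \<and> card (exposed S) = k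
      then Ppoly' d P (vanishing_coeffs (B (target_label S)) (probe_points u S)) z else 0)"

definition hard_label :: "entry list \<Rightarrow> nat \<Rightarrow> bool" where
  "hard_label S x \<longleftrightarrow> measure_pmf.prob (A S x) {q. snd q} \<le> 1 / 2"

text \<open>At the non-instance 0 the feature {0} would not be admissible.\<close>
definition adv_expl :: "entry list \<Rightarrow> bool \<Rightarrow> expl" where
  "adv_expl S y = (\<lambda>x xh.
     if x \<in> Xblock I \<and> xh \<in> Xblock I
     then Some (indic {x, 2 ^ (I + 1) + (if y then 0 else revealed_value S xh (x + 1 - 2 ^ I))})
     else if x = 0 then None else Some (indic {x}))"

text \<open>Every teacher labels the point 1 with 1, so once M mistakes are made the remaining rounds
  are consistent for free.\<close>
definition adversary :: adv where
  "adversary S =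
     (if num_mistakes S < M
      then let x = 2 ^ I + length S; y = hard_label S x in (x, y, adv_expl S y)
      else (1, True, adv_expl S True))"

lemma adversary_errs:
  assumes "num_mistakes S < M"
  shows "1 / 2 \<le> measure_pmf.prob (A S (fst (adversary S))) {q. snd q \<noteq> fst (snd (adversary S))}"
proof -
  define x where "x = 2 ^ I + length S"
  have "measure_pmf.prob (A S x) (space (measure_pmf (A S x)) - {q. snd q})
          = 1 - measure_pmf.prob (A S x) {q. snd q}"
    by (rule measure_pmf.prob_compl) simp
  moreover have "space (measure_pmf (A S x)) - {q. snd q} = {q. \<not> snd q}" by auto
  ultimately have compl: "measure_pmf.prob (A S x) {q. \<not> snd q} = 1 - measure_pmf.prob (A S x) {q. snd q}"
    by simp
  show ?thesis
  proof (cases "hard_label S x")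
    case True
    then show ?thesis
      using assms compl by (simp add: adversary_def Let_def x_def[symmetric] hard_label_def)
  next
    case False
    then show ?thesis
      using assms by (simp add: adversary_def Let_def x_def[symmetric] hard_label_def)
  qed
qed

lemma adversary_admissible: "adm_adv adversary"
  unfolding adm_adv_def
proof (rule allI, rule conjI)
  fix S
  show "1 \<le> fst (adversary S)" by (simp add: adversary_def Let_def Suc_le_eq)
  show "\<forall>u v \<phi>. snd (snd (adversary S)) u v = Some \<phi> \<longrightarrow> is_feature \<phi>"
    using not_mem_Xblock[of 0]
    by (auto simp: adversary_def Let_def adv_expl_def is_feature_def indic_def)
qed

lemma probeD: "probe u e \<Longrightarrow> u = fst (snd (snd e)) \<and> u \<in> Xblock I \<and> fst e \<in> Xblock I"
  by (auto simp: probe_def split: prod.splits)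

lemma probes_snoc: "probes u (S @ [e]) = probes u S + (if probe u e then 1 else 0)"
  by (simp add: probes_def)

lemma exposed_subset_Xblock: "exposed S \<subseteq> Xblock I"
proof
  fix u assume "u \<in> exposed S"
  then have "filter (probe u) S \<noteq> []" using d_pos by (auto simp: exposed_def probes_def)
  then obtain e where "probe u e" by (metis filter_False)
  then show "u \<in> Xblock I" by (simp add: probeD)
qed

lemma finite_exposed: "finite (exposed S)"
  using exposed_subset_Xblock by (rule finite_subset) (simp add: Xblock_def)

lemma exposed_Nil: "exposed [] = {}"
  using d_pos by (auto simp: exposed_def probes_def)

lemma exposed_snoc_mono: "exposed S \<subseteq> exposed (S @ [e])"
  by (auto simp: exposed_def probes_snoc)

lemma exposed_snoc_new:
  assumes "u \<in> exposed (S @ [e])" and "u \<notin> exposed S"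
  shows "probe u e" and "probes u S = d - 1"
  using assms by (auto simp: exposed_def probes_snoc split: if_splits)

lemma exposed_snoc_subset: "exposed (S @ [e]) \<subseteq> insert (fst (snd (snd e))) (exposed S)"
proof
  fix u assume "u \<in> exposed (S @ [e])"
  then show "u \<in> insert (fst (snd (snd e))) (exposed S)"
    using exposed_snoc_new(1)[of u S e] probeD[of u e] by blast
qed

lemma sum_probes_le_num_mistakes: "finite U \<Longrightarrow> (\<Sum>u\<in>U. probes u S) \<le> num_mistakes S"
proof (induction S rule: rev_induct)
  case Nil
  then show ?case by (simp add: probes_def)
next
  case (snoc e S)
  obtain x y xh yh \<phi> where e: "e = (x, y, xh, yh, \<phi>)" by (cases e)
  have "(\<Sum>u\<in>U. if probe u e then 1 else 0)
          = (\<Sum>u\<in>U. if u = xh then (if probe xh e then 1 else 0) else 0::nat)"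
    by (rule sum.cong) (auto simp: probe_def e)
  also have "\<dots> \<le> (if yh \<noteq> y then 1 else 0)"
    using snoc.prems by (auto simp: sum.delta probe_def e)
  finally have "(\<Sum>u\<in>U. if probe u e then 1 else 0) \<le> (if yh \<noteq> y then 1 else 0::nat)" .
  then show ?case
    using snoc by (simp add: probes_snoc sum.distrib e num_mistakes_snoc)
qed

lemma card_probe_points: "card (probe_points u S) \<le> probes u S"
proof -
  have "card (probe_points u S) \<le> card (set (filter (probe u) S))"
    unfolding probe_points_def by (simp add: card_image_le)
  also have "\<dots> \<le> probes u S" unfolding probes_def by (rule card_length)
  finally show ?thesis .
qed

lemma probe_points_range: "z \<in> probe_points u S \<Longrightarrow> 0 < z \<and> z < P"
  using block_offset_range probeD by (auto simp: probe_points_def)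

section \<open>Consistency with a reconstructed teacher\<close>

definition teacher_coeffs :: "entry list \<Rightarrow> nat \<Rightarrow> bool \<Rightarrow> nat list" where
  "teacher_coeffs S xh v =
     (if \<not> v \<and> target_label S xh then vanishing_coeffs (B (target_label S)) (probe_points xh S)
      else replicate d 0)"

definition teacher :: "entry list \<Rightarrow> teacher" where
  "teacher S = (target_label S, psi_a d P I (target_label S) (teacher_coeffs S))"

lemma target_label_Fcls: "target_label S \<in> Fcls I"
  using not_mem_Xblock by (auto simp: target_label_def Fcls_def labelled_true_def)

lemma vanishing_coeffs_spec:
  assumes "finite Z" and "card Z < d" and "\<forall>z\<in>Z. \<not> P dvd z" and "c0 < P"
  shows "length (vanishing_coeffs c0 Z) = d \<and> (\<forall>j<d. vanishing_coeffs c0 Z ! j < P)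
    \<and> vanishing_coeffs c0 Z ! 0 = c0 \<and> (\<forall>z\<in>Z. Ppoly' d P (vanishing_coeffs c0 Z) z = 0)"
  unfolding vanishing_coeffs_def by (rule someI_ex) (rule exists_Ppoly'_vanishing[OF prime_P assms])

lemma teacher_coeffs_spec:
  assumes "xh \<in> Xblock I" and "target_label S xh"
  shows "length (teacher_coeffs S xh False) = d \<and> (\<forall>j<d. teacher_coeffs S xh False ! j < P)
    \<and> teacher_coeffs S xh False ! 0 = B (target_label S)
    \<and> (\<forall>z \<in> probe_points xh S. Ppoly' d P (teacher_coeffs S xh False) z = 0)"
proof -
  have "xh \<notin> exposed S" using assms not_mem_Xblock[of 1] by (auto simp: target_label_def)
  then have card: "card (probe_points xh S) < d"
    using card_probe_points[of xh S] by (simp add: exposed_def)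
  have fin: "finite (probe_points xh S)" by (simp add: probe_points_def)
  have ndvd: "\<forall>z \<in> probe_points xh S. \<not> P dvd z"
  proof
    fix z assume "z \<in> probe_points xh S"
    then show "\<not> P dvd z" using probe_points_range[of z xh S] by (auto dest: dvd_imp_le)
  qed
  show ?thesis
    using vanishing_coeffs_spec[OF fin card ndvd B_less[OF target_label_Fcls]] assms(2)
    by (simp add: teacher_coeffs_def)
qed

lemma Ppoly'_teacher_coeffs_probe_point:
  assumes "xh \<in> Xblock I" and "z \<in> probe_points xh S"
  shows "Ppoly' d P (teacher_coeffs S xh False) z = 0"
  using teacher_coeffs_spec[OF assms(1)] assms(2) d_pos
  by (cases "target_label S xh") (auto simp: teacher_coeffs_def Ppoly'_replicate_0)

lemma teacher_mem_Tcls: "teacher S \<in> consistent_teachers (Tcls d p b) H_bullet"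
proof -
  have coeffs: "length (teacher_coeffs S xh v) = d \<and> (\<forall>j < d. teacher_coeffs S xh v ! j < P)"
    if "xh \<in> Xblock I" for xh v
  proof (cases "\<not> v \<and> target_label S xh")
    case True
    then show ?thesis using teacher_coeffs_spec[OF that] by simp
  next
    case False
    then show ?thesis using prime_gt_0_nat[OF prime_P] by (auto simp: teacher_coeffs_def)
  qed
  have "snd (teacher S) \<in> Psi_cls d P I B (target_label S)"
    unfolding Psi_cls_def teacher_def using coeffs teacher_coeffs_spec by auto
  then have "teacher S \<in> Tcls_i d (p I) I (b I)"
    using target_label_Fcls unfolding Tcls_i_def P_def B_def
    by (metis (mono_tags, lifting) mem_Collect_eq prod.collapse teacher_def fst_conv)
  then have "teacher S \<in> Tcls d p b"
    unfolding Tcls_def by (rule UN_I[rotated]) (simp add: I_def)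
  moreover have "target_label S 1" and "\<not> target_label S 2"
    using not_mem_Xblock by (auto simp: target_label_def labelled_true_def)
  ultimately show ?thesis by (simp add: consistent_teachers_def H_bullet_def teacher_def)
qed

lemma dff_block_explanation:
  assumes "(xh, yh) \<in> set_pmf (A S x)" and "xh \<in> Xblock I"
  shows "\<exists>e \<in> set S. fst e = xh \<and> fst (snd e) = yh"
proof -
  have "(xh, yh) \<in> H_bullet \<union> (\<lambda>(x, y, _, _, _). (x, y)) ` set S"
    using dff assms(1) unfolding dff_alg_def by blast
  moreover have "(xh, yh) \<notin> H_bullet"
    using not_mem_Xblock assms(2) by (auto simp: H_bullet_def)
  ultimately show ?thesis by force
qed

lemma revealed_value_nonzero_exposes:
  assumes "revealed_value S u z \<noteq> 0" and "probe u e"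
  shows "k < card (exposed (S @ [e]))"
proof -
  from assms(1) have u: "u \<notin> exposed S" "probes u S = d - 1" "card (exposed S) = k"
    by (auto simp: revealed_value_def split: if_splits)
  have "u \<in> exposed (S @ [e])"
    using u(2) assms(2) d_pos by (simp add: exposed_def probes_snoc)
  moreover have "exposed S \<subseteq> exposed (S @ [e])" by (rule exposed_snoc_mono)
  ultimately have "insert u (exposed S) \<subseteq> exposed (S @ [e])" by blast
  then have "card (insert u (exposed S)) \<le> card (exposed (S @ [e]))"
    by (rule card_mono[OF finite_exposed])
  then show ?thesis using u finite_exposed by simp
qed

lemma exposing_probe:
  assumes "card (exposed S) \<le> k" and "k < card (exposed (S @ [e]))"
  shows "fst (snd (snd e)) \<notin> exposed S" and "probe (fst (snd (snd e))) e"
    and "probes (fst (snd (snd e))) S = d - 1" and "card (exposed S) = k"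
proof -
  let ?u = "fst (snd (snd e))"
  have sub: "exposed (S @ [e]) \<subseteq> insert ?u (exposed S)" by (rule exposed_snoc_subset)
  have "\<not> exposed (S @ [e]) \<subseteq> exposed S"
    using card_mono[OF finite_exposed, of "exposed (S @ [e])" S] assms by linarith
  with sub have new: "?u \<in> exposed (S @ [e])" and old: "?u \<notin> exposed S" by blast+
  show "?u \<notin> exposed S" by (rule old)
  show "probe ?u e" and "probes ?u S = d - 1" using new old by (rule exposed_snoc_new)+
  have "card (exposed (S @ [e])) \<le> card (insert ?u (exposed S))"
    using sub by (intro card_mono) (simp_all add: finite_exposed)
  then show "card (exposed S) = k" using assms old finite_exposed by simp
qed

lemma consistent_entry_teacher_fresh:
  assumes x: "x \<in> Xblock I" and label: "target_label S x = y"
    and revealed: "\<not> y \<Longrightarrow> yh \<Longrightarrow> xh \<in> Xblock I \<Longrightarrow>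
       Ppoly' d P (teacher_coeffs S xh False) (x + 1 - 2 ^ I) = revealed_value S' xh (x + 1 - 2 ^ I)"
  shows "consistent_entry (teacher S) (x, y, xh, yh, if yh = y then None else adv_expl S' y x xh)"
proof -
  have "x \<noteq> 0" using x by (auto simp: mem_Xblock_iff)
  have "psi_a d P I (target_label S) (teacher_coeffs S) x xh = adv_expl S' y x xh" if "yh \<noteq> y"
  proof (cases "xh \<in> Xblock I")
    case False
    then show ?thesis using \<open>x \<noteq> 0\<close> by (simp add: psi_a_def adv_expl_def)
  next
    case True
    have "Ppoly' d P (teacher_coeffs S xh y) (x + 1 - 2 ^ I)
            = (if y then 0 else revealed_value S' xh (x + 1 - 2 ^ I))"
      using revealed that True d_pos by (cases y) (auto simp: teacher_coeffs_def Ppoly'_replicate_0)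
    then show ?thesis using x True label by (simp add: psi_a_def adv_expl_def Ppoly_def)
  qed
  then show ?thesis using label by (simp add: consistent_entry_def teacher_def)
qed

lemma consistent_entry_teacher_settled:
  "consistent_entry (teacher S) (1, True, xh, yh, if yh = True then None else adv_expl S' True 1 xh)"
  using not_mem_Xblock[of 1]
  by (simp add: consistent_entry_def teacher_def target_label_def psi_a_def adv_expl_def)

definition exposure_time :: "entry list \<Rightarrow> nat" where
  "exposure_time S = (LEAST t. t = length S \<or> k < card (exposed (take (Suc t) S)))"

text \<open>The teacher reconstructed from this prefix is the one the run is k-consistent with; the
  exceptions are the rounds showing its exposed points.\<close>
definition pre_exposure :: "entry list \<Rightarrow> entry list" where
  "pre_exposure S = take (exposure_time S) S"

lemma exposure_time_le: "exposure_time S \<le> length S"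
  unfolding exposure_time_def by (rule Least_le) simp

lemma card_exposed_before: "t < exposure_time S \<Longrightarrow> card (exposed (take (Suc t) S)) \<le> k"
  unfolding exposure_time_def by (drule not_less_Least) simp

lemma card_exposed_at:
  "exposure_time S < length S \<Longrightarrow> k < card (exposed (take (Suc (exposure_time S)) S))"
  using LeastI[of "\<lambda>t. t = length S \<or> k < card (exposed (take (Suc t) S))" "length S"]
  unfolding exposure_time_def by auto

lemma card_exposed_pre_exposure: "card (exposed (pre_exposure S)) \<le> k"
proof (cases "exposure_time S")
  case 0
  then show ?thesis by (simp add: pre_exposure_def exposed_Nil)
next
  case (Suc t)
  then show ?thesis using card_exposed_before[of t S] by (simp add: pre_exposure_def)
qed

lemma mistakes_after_exposure:
  assumes "exposure_time S < t" and "t \<le> length S"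
  shows "M \<le> num_mistakes (take t S)"
proof -
  define C where "C = exposed (take (Suc (exposure_time S)) S)"
  have "exposure_time S < length S" using assms by simp
  then have "k + 1 \<le> card C" using card_exposed_at by (simp add: C_def Suc_le_eq)
  then have "M \<le> card C * d" unfolding M_def by (rule mult_le_mono1)
  also have "\<dots> \<le> (\<Sum>u\<in>C. probes u (take (Suc (exposure_time S)) S))"
    using sum_mono[of C "\<lambda>_. d"] by (simp add: C_def exposed_def)
  also have "\<dots> \<le> num_mistakes (take (Suc (exposure_time S)) S)"
    by (rule sum_probes_le_num_mistakes) (simp add: C_def finite_exposed)
  also have "\<dots> \<le> num_mistakes (take t S)"
    unfolding num_mistakes_def using assms(1) by (intro length_filter_take_mono) simp
  finally show ?thesis .
qed

context
  fixes S assumes S_run: "S \<in> set_pmf (run A adversary L)"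
begin

lemma length_run: "length S = L"
  using reachable_run[OF S_run] by simp

lemma nth_run:
  assumes "t < L"
  obtains q where "q \<in> set_pmf (A (take t S) (fst (adversary (take t S))))"
    and "S ! t = next_entry adversary (take t S) q"
  using reachable_run[OF S_run] assms unfolding reachable_def by auto

lemma fst_nth_run:
  assumes "t < L"
  shows "fst (S ! t) = (if num_mistakes (take t S) < M then 2 ^ I + t else 1)"
proof -
  obtain q where "S ! t = next_entry adversary (take t S) q" using nth_run[OF assms] by blast
  moreover have "length (take t S) = t" using assms length_run by simp
  ultimately show ?thesis by (simp add: next_entry_def adversary_def Let_def split: prod.split)
qed

lemma nth_run_fresh:
  assumes "t < L" and "num_mistakes (take t S) < M"
    and "x = 2 ^ I + t" and "y = hard_label (take t S) x"
  obtains xh yh where "(xh, yh) \<in> set_pmf (A (take t S) x)"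
    and "S ! t = (x, y, xh, yh, if yh = y then None else adv_expl (take t S) y x xh)"
proof -
  obtain q where q: "q \<in> set_pmf (A (take t S) (fst (adversary (take t S))))"
    and St: "S ! t = next_entry adversary (take t S) q"
    using nth_run[OF assms(1)] .
  have "length (take t S) = t" using assms(1) length_run by simp
  then have adv: "adversary (take t S) = (x, y, adv_expl (take t S) y)"
    using assms(2-4) by (simp add: adversary_def Let_def)
  show ?thesis
  proof (rule that)
    show "(fst q, snd q) \<in> set_pmf (A (take t S) x)" using q adv by simp
    show "S ! t = (x, y, fst q, snd q, if snd q = y then None else adv_expl (take t S) y x (fst q))"
      using St adv by (simp add: next_entry_def)
  qed
qed

lemma nth_run_settled:
  assumes "t < L" and "\<not> num_mistakes (take t S) < M"
  obtains xh yh where "S ! t = (1, True, xh, yh, if yh = True then None else adv_expl (take t S) True 1 xh)"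
proof -
  obtain q where "S ! t = next_entry adversary (take t S) q"
    using nth_run[OF assms(1)] by blast
  then show ?thesis using that[of "fst q" "snd q"] assms(2) by (simp add: next_entry_def adversary_def)
qed

lemma fresh_time_unique:
  assumes "j < L" and "l < L" and "fst (S ! j) \<in> Xblock I" and "fst (S ! j) = fst (S ! l)"
  shows "j = l"
  using fst_nth_run[OF assms(1)] fst_nth_run[OF assms(2)] assms(3,4) not_mem_Xblock[of 1]
  by (auto split: if_splits)

lemma not_labelled_true_fresh:
  assumes "t < L" and "fst (S ! t) \<in> Xblock I" and "\<not> fst (snd (S ! t))"
  shows "fst (S ! t) \<notin> labelled_true (take n S)"
proof
  assume "fst (S ! t) \<in> labelled_true (take n S)"
  then obtain e where e: "e \<in> set S" "fst e = fst (S ! t)" "fst (snd e)"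
    by (auto simp: labelled_true_def dest: in_set_takeD)
  then obtain l where "l < L" "S ! l = e" by (auto simp: in_set_conv_nth length_run)
  then show False using fresh_time_unique[OF assms(1) \<open>l < L\<close> assms(2)] e assms(3) by auto
qed

lemma consistent_before_exposure:
  assumes "t < exposure_time S" and "num_mistakes (take t S) < M"
    and "fst (S ! t) \<notin> exposed (pre_exposure S)"
  shows "consistent_entry (teacher (pre_exposure S)) (S ! t)"
proof -
  have t: "t < L" using assms(1) exposure_time_le[of S] length_run by simp
  define x where "x = 2 ^ I + t"
  define y where "y = hard_label (take t S) x"
  obtain xh yh where St: "S ! t = (x, y, xh, yh, if yh = y then None else adv_expl (take t S) y x xh)"
    using nth_run_fresh[OF t assms(2) x_def y_def] by blast
  have x: "x \<in> Xblock I" using fresh_mem_Xblock[OF t] by (simp add: x_def)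
  have "t < length (pre_exposure S)" and "pre_exposure S ! t = S ! t"
    using assms(1) t length_run by (simp_all add: pre_exposure_def)
  then have mem: "S ! t \<in> set (pre_exposure S)" by (metis nth_mem)
  have label: "target_label (pre_exposure S) x = y"
  proof (cases y)
    case True
    then have "x \<in> labelled_true (pre_exposure S)"
      using mem x St by (force simp: labelled_true_def)
    then show ?thesis using assms(3) St True by (simp add: target_label_def)
  next
    case False
    then have "x \<notin> labelled_true (pre_exposure S)"
      using not_labelled_true_fresh[OF t] x St by (simp add: pre_exposure_def)
    then show ?thesis using False x not_mem_Xblock[of 1] by (auto simp: target_label_def)
  qed
  show ?thesis unfolding St
  proof (rule consistent_entry_teacher_fresh[OF x label])
    assume "\<not> y" and "yh" and xh: "xh \<in> Xblock I"
    then have probe: "probe xh (S ! t)" using St x by (simp add: probe_def)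
    have "card (exposed (take t S @ [S ! t])) \<le> k"
      using card_exposed_before[OF assms(1)] t length_run by (simp add: take_Suc_conv_app_nth)
    then have "revealed_value (take t S) xh (x + 1 - 2 ^ I) = 0"
      using revealed_value_nonzero_exposes[OF _ probe] by (meson not_le)
    moreover have "x + 1 - 2 ^ I \<in> probe_points xh (pre_exposure S)"
      using mem probe St by (force simp: probe_points_def)
    ultimately show "Ppoly' d P (teacher_coeffs (pre_exposure S) xh False) (x + 1 - 2 ^ I)
        = revealed_value (take t S) xh (x + 1 - 2 ^ I)"
      using Ppoly'_teacher_coeffs_probe_point[OF xh] by simp
  qed
qed

lemma consistent_at_exposure:
  assumes "exposure_time S < L" and "num_mistakes (take (exposure_time S) S) < M"
  shows "consistent_entry (teacher (pre_exposure S)) (S ! exposure_time S)"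
proof -
  define t where "t = exposure_time S"
  define S' where "S' = take t S"
  have t: "t < L" and S': "pre_exposure S = S'"
    using assms(1) by (simp_all add: t_def S'_def pre_exposure_def)
  define x where "x = 2 ^ I + t"
  define y where "y = hard_label S' x"
  obtain xh yh where q: "(xh, yh) \<in> set_pmf (A S' x)"
    and St: "S ! t = (x, y, xh, yh, if yh = y then None else adv_expl S' y x xh)"
    using nth_run_fresh[OF t assms(2)[folded t_def] x_def y_def[unfolded S'_def]]
    unfolding S'_def by blast
  have x: "x \<in> Xblock I" using fresh_mem_Xblock[OF t] by (simp add: x_def)
  have old: "card (exposed S') \<le> k"
    using card_exposed_pre_exposure[of S] S' by simp
  have grown: "k < card (exposed (S' @ [S ! t]))"
    using card_exposed_at[of S] assms(1) length_run by (simp add: take_Suc_conv_app_nth t_def S'_def)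
  have "xh \<notin> exposed S'" and probe: "probe xh (S ! t)"
    and probes: "probes xh S' = d - 1" and card: "card (exposed S') = k"
    using exposing_probe[OF old grown] St by simp_all
  then have "\<not> y" and "yh" and xh: "xh \<in> Xblock I" using St by (auto simp: probe_def)
  have "x \<notin> labelled_true S'"
    using not_labelled_true_fresh[OF t] x St \<open>\<not> y\<close> by (simp add: S'_def)
  then have label: "target_label S' x = y"
    using \<open>\<not> y\<close> x not_mem_Xblock[of 1] by (auto simp: target_label_def)
  have "xh \<in> labelled_true S'"
    using dff_block_explanation[OF q xh] xh \<open>yh\<close> by (auto simp: labelled_true_def)
  then have "target_label S' xh"
    using \<open>xh \<notin> exposed S'\<close> by (simp add: target_label_def)
  show ?thesis unfolding t_def[symmetric] St S'
  proof (rule consistent_entry_teacher_fresh[OF x label])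
    show "Ppoly' d P (teacher_coeffs S' xh False) (x + 1 - 2 ^ I)
        = revealed_value S' xh (x + 1 - 2 ^ I)"
      using \<open>target_label S' xh\<close> \<open>xh \<notin> exposed S'\<close> probes card
      by (simp add: teacher_coeffs_def revealed_value_def)
  qed
qed

lemma consistent_round:
  assumes "t < L" and "fst (S ! t) \<notin> exposed (pre_exposure S)"
  shows "consistent_entry (teacher (pre_exposure S)) (S ! t)"
proof (cases "num_mistakes (take t S) < M")
  case False
  then show ?thesis
    using nth_run_settled[OF assms(1)] by (metis consistent_entry_teacher_settled)
next
  case True
  consider "t < exposure_time S" | "t = exposure_time S" | "exposure_time S < t" by linarith
  then show ?thesis
  proof cases
    case 1
    then show ?thesis using consistent_before_exposure True assms(2) by blast
  next
    case 2
    then show ?thesis using consistent_at_exposure True assms(1) by simp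
  next
    case 3
    then have "M \<le> num_mistakes (take t S)"
      using mistakes_after_exposure assms(1) length_run by simp
    with True show ?thesis by simp
  qed
qed

lemma run_k_consistent: "\<exists>Te \<in> consistent_teachers (Tcls d p b) H_bullet. k_consistent k Te S"
proof -
  define E where "E = {t. t < L \<and> fst (S ! t) \<in> exposed (pre_exposure S)}"
  have "inj_on (\<lambda>t. fst (S ! t)) E"
    using fresh_time_unique exposed_subset_Xblock by (auto simp: E_def inj_on_def)
  then have "card E \<le> card (exposed (pre_exposure S))"
    by (rule card_inj_on_le) (auto simp: E_def finite_exposed)
  also have "\<dots> \<le> k" by (rule card_exposed_pre_exposure)
  finally have "k_consistent k (teacher (pre_exposure S)) S"
    by (intro k_consistentI[of E]) (auto simp: E_def length_run intro: consistent_round)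
  then show ?thesis using teacher_mem_Tcls by blast
qed

end

lemma mistake_bound_ge: "ereal (real M - 1) \<le> mistake_bound L k A (Tcls d p b) H_bullet"
proof -
  have "adversary \<in> {Adv. adm_adv Adv \<and> (\<forall>S \<in> set_pmf (run A Adv L).
          \<exists>Te \<in> consistent_teachers (Tcls d p b) H_bullet. k_consistent k Te S)}"
    using adversary_admissible run_k_consistent by blast
  then have "ereal (expected_mistakes A adversary L) \<le> mistake_bound L k A (Tcls d p b) H_bullet"
    unfolding mistake_bound_def by (rule SUP_upper)
  moreover have "real M - 1 \<le> expected_mistakes A adversary L"
  proof (rule expected_mistakes_ge)
    show "finite (set_pmf (A S x))" for S x
      using finite_set_pmf_dff_alg[OF dff] by (simp add: H_bullet_def)
    show "1 / 2 \<le> measure_pmf.prob (A S (fst (adversary S))) {q. snd q \<noteq> fst (snd (adversary S))}"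
      if "num_mistakes S < M" for S
      using adversary_errs[OF that] .
    show "4 * M \<le> L" using L_ge by (simp add: M_def algebra_simps)
  qed (rule M_pos)
  ultimately show ?thesis by (meson ereal_less_eq(3) order_trans)
qed

end

theorem mainTheorem16:
  fixes k d L :: nat
    and p :: "nat \<Rightarrow> nat"
    and b :: "nat \<Rightarrow> (nat \<Rightarrow> bool) \<Rightarrow> nat"
    and A :: alg
  assumes "1 \<le> k" and "1 \<le> d" and "4 * (k + 1) * d \<le> L"
    and "\<forall>i \<ge> 1. prime (p i) \<and> 2 ^ card (Xblock i) \<le> p i"
    and "\<forall>i \<ge> 1. inj_on (b i) (Fcls i) \<and> b i ` Fcls i \<subseteq> {..<p i}"
    and "dff_alg H_bullet A"
  shows "ereal (real ((k + 1) * d) - 1) \<le> mistake_bound L k A (Tcls d p b) H_bullet"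
proof -
  interpret lower_bound_construction k d L p b A
    using assms(2-6) by unfold_locales auto
  show ?thesis using mistake_bound_ge by (simp add: M_def)
qed

end
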